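(* Let $G$ be a stitched 2-ichromatic ordered graph whose two parts (in its interval 2-coloring) have sizes $m$ and $n$. Then $R(G) \geq 4r+1$, where $r = \min(m,n)-1$.
   Context: An ordered graph is a graph together with a specified linear ordering of its vertex set. An ordered graph $G$ is contained in an ordered graph $H$ (a copy of $G$ in $H$) if there is an order-preserving injection $V(G)\to V(H)$ mapping edges to edges. An interval coloring of an ordered graph is a partition of its vertex set into independent sets each consisting of consecutive vertices (these sets are called parts); the interval chromatic number is the minimum number of parts in an interval coloring, and an ordered graph is $k$-ichromatic if its interval chromatic number is $k$. A $k$-ichromatic ordered graph is stitched if, for some interval coloring with $k$ parts, the set of size $2k$ consisting of the first and last vertex of each part lies in a single connected component of the graph (for stitched 2-ichromatic graphs the interval 2-coloring is unique). For $t\ge 1$, the $t$-color Ramsey number $R_t(G)$ of an ordered graph $G$ is the minimum $N$ such that every coloring of the edges of the ordered complete graph on $N$ vertices with $t$ colors contains a monochromatic copy of $G$ (as an ordered subgraph); $R(G)=R_2(G)$. *)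

theory Defs
  imports Main
begin

text \<open>An ordered graph on k vertices is represented with vertex set {0..<k}
  (ordered by the natural order) and a symmetric irreflexive edge relation E.\<close>

definition ograph :: "nat \<Rightarrow> (nat \<Rightarrow> nat \<Rightarrow> bool) \<Rightarrow> bool" where
  "ograph k E \<longleftrightarrow> (\<forall>u v. E u v \<longrightarrow> u < k \<and> v < k \<and> u \<noteq> v) \<and> (\<forall>u v. E u v \<longrightarrow> E v u)"

definition interval_coloring ::
  "nat \<Rightarrow> (nat \<Rightarrow> nat \<Rightarrow> bool) \<Rightarrow> (nat \<Rightarrow> nat) \<Rightarrow> nat \<Rightarrow> bool" where
  "interval_coloring k E a p \<longleftrightarrow> a 0 = 0 \<and> a p = k \<and> (\<forall>i<p. a i < a (Suc i)) \<and>
     (\<forall>i<p. \<forall>u v. a i \<le> u \<and> u < a (Suc i) \<and> a i \<le> v \<and> v < a (Suc i) \<longrightarrow> \<not> E u v)"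

definition interval_chromatic_number :: "nat \<Rightarrow> (nat \<Rightarrow> nat \<Rightarrow> bool) \<Rightarrow> nat" where
  "interval_chromatic_number k E = (LEAST p. \<exists>a. interval_coloring k E a p)"

definition stitched :: "nat \<Rightarrow> (nat \<Rightarrow> nat \<Rightarrow> bool) \<Rightarrow> bool" where
  "stitched k E \<longleftrightarrow> (\<exists>a. interval_coloring k E a (interval_chromatic_number k E) \<and>
     (let S = (\<Union>i<interval_chromatic_number k E. {a i, a (Suc i) - 1})
      in \<forall>x\<in>S. \<forall>y\<in>S. E\<^sup>*\<^sup>* x y))"

definition contains_copy ::
  "nat \<Rightarrow> (nat \<Rightarrow> nat \<Rightarrow> bool) \<Rightarrow> nat \<Rightarrow> (nat \<Rightarrow> nat \<Rightarrow> bool) \<Rightarrow> bool" where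
  "contains_copy k E N H \<longleftrightarrow> (\<exists>f. strict_mono_on {0..<k} f \<and> f ` {0..<k} \<subseteq> {0..<N} \<and>
     (\<forall>u v. E u v \<longrightarrow> H (f u) (f v)))"

text \<open>Every t-colouring of the edges {u,v} (u<v<N) of the ordered complete graph
  on N vertices (colour of {u,v} given by c u v) has a monochromatic copy.\<close>

definition ramsey_arrows :: "nat \<Rightarrow> nat \<Rightarrow> (nat \<Rightarrow> nat \<Rightarrow> bool) \<Rightarrow> nat \<Rightarrow> bool" where
  "ramsey_arrows t k E N \<longleftrightarrow>
     (\<forall>c :: nat \<Rightarrow> nat \<Rightarrow> nat. (\<forall>u v. u < v \<longrightarrow> v < N \<longrightarrow> c u v < t) \<longrightarrow>
       (\<exists>i<t. contains_copy k E N
          (\<lambda>x y. x \<noteq> y \<and> x < N \<and> y < N \<and> c (min x y) (max x y) = i)))"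

definition ordered_ramsey :: "nat \<Rightarrow> nat \<Rightarrow> (nat \<Rightarrow> nat \<Rightarrow> bool) \<Rightarrow> nat" where
  "ordered_ramsey t k E = (LEAST N. ramsey_arrows t k E N)"

end

theory Submission
  imports Defs "HOL-Library.Ramsey"
begin

text \<open>Split the first 4r vertices of the host into four consecutive blocks of length r and
  colour an edge by whether its endpoints lie in blocks of equal parity. In a monochromatic
  copy, every edge crosses the cut between the two parts, so the block parity of the image
  (flipped on the first part when the colour is "different parity") is constant along paths.
  Stitchedness connects the two ends of each part, so the image of each part begins and ends
  in blocks of the same parity; as each part has more than r vertices, it spans at least three
  blocks, and two such spans do not fit disjointly into four blocks.\<close>

lemma rtranclp_preserves_eq:
  assumes "\<And>u v. E u v \<Longrightarrow> h u = h v" and "E\<^sup>*\<^sup>* x y"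
  shows "h x = h y"
  using assms(2) by (induction rule: rtranclp_induct) (auto dest: assms(1))

lemma interval_coloring_2_edge_crosses:
  assumes "ograph k E" and "interval_coloring k E a 2" and "E u v"
  shows "(u < a 1) \<noteq> (v < a 1)"
proof -
  have "u < k" "v < k" using assms(1,3) by (auto simp: ograph_def)
  moreover have "\<not> (u < a 1 \<and> v < a 1)" "\<not> (a 1 \<le> u \<and> a 1 \<le> v \<and> u < k \<and> v < k)"
    using assms(2,3) unfolding interval_coloring_def numeral_2_eq_2
    by (metis zero_le lessI less_Suc_eq One_nat_def)+
  ultimately show ?thesis by auto
qed

lemma interval_coloring_2_cut_unique:
  assumes "ograph k E" and "interval_coloring k E a 2" and "interval_coloring k E b 2"
    and "E\<^sup>*\<^sup>* 0 (b 1 - 1)" and "E\<^sup>*\<^sup>* 0 (b 1)"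
  shows "b 1 = a 1"
proof -
  have "0 < a 1" "0 < b 1"
    using assms(2,3) unfolding interval_coloring_def by (metis zero_less_numeral One_nat_def)+
  define same_side where "same_side x \<longleftrightarrow> (x < a 1) = (x < b 1)" for x
  have "same_side u = same_side v" if "E u v" for u v
    using interval_coloring_2_edge_crosses[OF assms(1,2) that]
      interval_coloring_2_edge_crosses[OF assms(1,3) that] unfolding same_side_def by blast
  then have "same_side 0 = same_side x" if "E\<^sup>*\<^sup>* 0 x" for x
    using that by (rule rtranclp_preserves_eq)
  moreover have "same_side 0" using \<open>0 < a 1\<close> \<open>0 < b 1\<close> by (simp add: same_side_def)
  ultimately have "same_side (b 1 - 1)" "same_side (b 1)" using assms(4,5) by blast+
  then show ?thesis using \<open>0 < b 1\<close> unfolding same_side_def by linarith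
qed

lemma stitched_2_parts_connected:
  assumes "ograph k E" and "interval_chromatic_number k E = 2" and "stitched k E"
    and "interval_coloring k E a 2"
  shows "E\<^sup>*\<^sup>* 0 (a 1 - 1)" and "E\<^sup>*\<^sup>* (a 1) (k - 1)"
proof -
  have ends: "(\<Union>i<2. {b i, b (Suc i) - 1}) = {b 0, b 1 - 1, b 1, b 2 - 1}" for b :: "nat \<Rightarrow> nat"
    by (auto simp: numeral_2_eq_2 less_Suc_eq)
  have "\<exists>b. interval_coloring k E b 2 \<and>
      (\<forall>x\<in>{b 0, b 1 - 1, b 1, b 2 - 1}. \<forall>y\<in>{b 0, b 1 - 1, b 1, b 2 - 1}. E\<^sup>*\<^sup>* x y)"
    using assms(3) unfolding stitched_def Let_def assms(2) ends .
  then obtain b where b: "interval_coloring k E b 2"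
    and conn: "\<forall>x\<in>{b 0, b 1 - 1, b 1, b 2 - 1}. \<forall>y\<in>{b 0, b 1 - 1, b 1, b 2 - 1}. E\<^sup>*\<^sup>* x y"
    by blast
  have "b 0 = 0" "b 2 = k" using b by (auto simp: interval_coloring_def)
  then have "b 1 = a 1" using interval_coloring_2_cut_unique[OF assms(1,4) b] conn by simp
  then show "E\<^sup>*\<^sup>* 0 (a 1 - 1)" "E\<^sup>*\<^sup>* (a 1) (k - 1)"
    using conn \<open>b 0 = 0\<close> \<open>b 2 = k\<close> by simp_all
qed

lemma contains_copy_of_clique:
  assumes "ograph k E" and "H \<in> nsets {..<N} k"
    and "\<And>x y. x \<in> H \<Longrightarrow> y \<in> H \<Longrightarrow> x \<noteq> y \<Longrightarrow> Q x y"
  shows "contains_copy k E N Q"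
proof -
  have "finite H" "card H = k" "H \<subseteq> {..<N}" using assms(2) by (auto simp: nsets_def)
  define f where "f = (!) (sorted_list_of_set H)"
  have f_in: "f j \<in> H" if "j < k" for j
    using that \<open>finite H\<close> \<open>card H = k\<close>
    by (metis f_def length_sorted_list_of_set nth_mem set_sorted_list_of_set)
  have "sorted_wrt (<) (sorted_list_of_set H)" by simp
  then have smono: "strict_mono_on {0..<k} f"
    using \<open>finite H\<close> \<open>card H = k\<close> by (auto simp: strict_mono_on_def f_def sorted_wrt_iff_nth_less)
  show ?thesis
    unfolding contains_copy_def
  proof (intro exI conjI allI impI)
    show "f ` {0..<k} \<subseteq> {0..<N}" using f_in \<open>H \<subseteq> {..<N}\<close> by fastforce
    fix u v assume "E u v"
    then have "u < k" "v < k" "u \<noteq> v" using assms(1) by (auto simp: ograph_def)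
    then have "f u \<noteq> f v"
      using strict_mono_on_eqD[OF smono] by (metis atLeastLessThan_iff zero_le)
    then show "Q (f u) (f v)" using assms(3) f_in \<open>u < k\<close> \<open>v < k\<close> by blast
  qed (rule smono)
qed

lemma ramsey_arrows_exists:
  assumes "ograph k E"
  shows "\<exists>N. ramsey_arrows t k E N"
proof -
  obtain N :: nat where N: "partn_lst {..<N} (replicate t k) 2"
    using ramsey_full by blast
  have "ramsey_arrows t k E N"
    unfolding ramsey_arrows_def
  proof (intro allI impI)
    fix c :: "nat \<Rightarrow> nat \<Rightarrow> nat"
    assume c: "\<forall>u v. u < v \<longrightarrow> v < N \<longrightarrow> c u v < t"
    define g where "g S = c (Min S) (Max S)" for S :: "nat set"
    have "g \<in> nsets {..<N} 2 \<rightarrow> {..<t}"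
      using c by (auto simp: g_def nsets_def card_2_iff)
    then obtain i H where i: "i < t" and H: "H \<in> nsets {..<N} k" and mono: "g ` nsets H 2 \<subseteq> {i}"
      using partn_lstE[OF N] by (metis length_replicate nth_replicate)
    have "c (min x y) (max x y) = i" if "x \<in> H" "y \<in> H" "x \<noteq> y" for x y
    proof -
      have "{x, y} \<in> nsets H 2" using that by (simp add: nsets_def)
      then have "g {x, y} = i" using mono by blast
      then show ?thesis by (simp add: g_def)
    qed
    moreover have "H \<subseteq> {..<N}" using H by (simp add: nsets_def)
    ultimately have "contains_copy k E N (\<lambda>x y. x \<noteq> y \<and> x < N \<and> y < N \<and> c (min x y) (max x y) = i)"
      by (intro contains_copy_of_clique[OF assms H]) blast
    then show "\<exists>i<t. contains_copy k E N
        (\<lambda>x y. x \<noteq> y \<and> x < N \<and> y < N \<and> c (min x y) (max x y) = i)"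
      using i by blast
  qed
  then show ?thesis by blast
qed

definition block_parity_coloring :: "nat \<Rightarrow> nat \<Rightarrow> nat \<Rightarrow> nat" where
  "block_parity_coloring r u v = (if even (u div r) = even (v div r) then 0 else 1)"

lemma block_parity_copy_same_side:
  assumes "ograph k E" and "interval_coloring k E a 2"
    and copy: "\<And>u v. E u v \<Longrightarrow> block_parity_coloring r (min (f u) (f v)) (max (f u) (f v)) = i"
    and "E\<^sup>*\<^sup>* x y" and "(x < a 1) = (y < a 1)"
  shows "even (f x div r) = even (f y div r)"
proof -
  define h where "h x \<longleftrightarrow> even (f x div r) \<noteq> (i = 1 \<and> x < a 1)" for x
  have "h u = h v" if "E u v" for u v
  proof -
    have "block_parity_coloring r (f u) (f v) = i"
      using copy[OF that] by (cases "f u \<le> f v") (auto simp: block_parity_coloring_def)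
    then show ?thesis
      using interval_coloring_2_edge_crosses[OF assms(1,2) that]
      by (auto simp: h_def block_parity_coloring_def split: if_splits)
  qed
  then have "h x = h y" using assms(4) by (rule rtranclp_preserves_eq)
  then show ?thesis using assms(5) unfolding h_def by blast
qed

lemma strict_mono_on_atLeastLessThan_gap:
  fixes f :: "nat \<Rightarrow> nat"
  assumes "strict_mono_on {0..<k} f" and "x \<le> y" and "y < k"
  shows "f x + (y - x) \<le> f y"
  using assms(2,3)
proof (induction y rule: dec_induct)
  case (step y)
  then have "f y < f (Suc y)" using assms(1) by (simp add: strict_mono_on_def)
  then show ?case using step by simp
qed simp

lemma no_two_spans_in_four_blocks:
  fixes p0 p1 p2 p3 r :: nat
  assumes "0 < r" and "p0 + r \<le> p1" and "p1 \<le> p2" and "p2 + r \<le> p3" and "p3 < 4 * r"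
    and "even (p0 div r) = even (p1 div r)" and "even (p2 div r) = even (p3 div r)"
  shows False
proof -
  have "p0 div r + 1 \<le> p1 div r" "p2 div r + 1 \<le> p3 div r"
    using div_le_mono[OF assms(2), of r] div_le_mono[OF assms(4), of r] assms(1) by simp_all
  then have "p0 div r + 2 \<le> p1 div r" "p2 div r + 2 \<le> p3 div r"
    using assms(6,7) by (metis Suc_eq_plus1 add_2_eq_Suc' even_Suc le_antisym not_less_eq_eq)+
  moreover have "p1 div r \<le> p2 div r" using assms(3) by (rule div_le_mono)
  moreover have "p3 div r < 4" using assms(1,5) by (simp add: div_less_iff_less_mult)
  ultimately show False by linarith
qed

lemma not_ramsey_arrows_4r:
  assumes "ograph k E" and "interval_coloring k E a 2"
    and "E\<^sup>*\<^sup>* 0 (a 1 - 1)" and "E\<^sup>*\<^sup>* (a 1) (k - 1)"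
    and "N \<le> 4 * (min (a 1 - a 0) (a 2 - a 1) - 1)"
  shows "\<not> ramsey_arrows 2 k E N"
proof
  assume "ramsey_arrows 2 k E N"
  define r where "r = min (a 1 - a 0) (a 2 - a 1) - 1"
  have "a 0 = 0" "a 2 = k" and cuts: "\<forall>j<2. a j < a (Suc j)"
    using assms(2) unfolding interval_coloring_def by blast+
  then have "0 < a 1" "a 1 < k" using cuts[rule_format, of 0] cuts[rule_format, of 1]
    by (simp_all add: numeral_2_eq_2)
  have "\<forall>u v. u < v \<longrightarrow> v < N \<longrightarrow> block_parity_coloring r u v < 2"
    by (simp add: block_parity_coloring_def)
  then obtain i where "contains_copy k E N
      (\<lambda>x y. x \<noteq> y \<and> x < N \<and> y < N \<and> block_parity_coloring r (min x y) (max x y) = i)"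
    using \<open>ramsey_arrows 2 k E N\<close> unfolding ramsey_arrows_def by blast
  then obtain f where smono: "strict_mono_on {0..<k} f" and "f ` {0..<k} \<subseteq> {0..<N}"
    and "\<And>u v. E u v \<Longrightarrow> f u \<noteq> f v \<and> f u < N \<and> f v < N \<and>
      block_parity_coloring r (min (f u) (f v)) (max (f u) (f v)) = i"
    unfolding contains_copy_def by blast
  then have copy: "\<And>u v. E u v \<Longrightarrow> block_parity_coloring r (min (f u) (f v)) (max (f u) (f v)) = i"
    by blast
  have "f (k - 1) < N"
    using \<open>f ` {0..<k} \<subseteq> {0..<N}\<close> \<open>a 1 < k\<close> by (auto simp: image_subset_iff)
  then have "0 < r" using assms(5) r_def by linarith
  have gap: "f x + (y - x) \<le> f y" if "x \<le> y" "y < k" for x y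
    using strict_mono_on_atLeastLessThan_gap[OF smono that] .
  have "r \<le> a 1 - 1" "r \<le> k - 1 - a 1" using r_def \<open>a 0 = 0\<close> \<open>a 2 = k\<close> by linarith+
  moreover have "f 0 + (a 1 - 1) \<le> f (a 1 - 1)" "f (a 1) + (k - 1 - a 1) \<le> f (k - 1)"
    using gap[of 0 "a 1 - 1"] gap[of "a 1" "k - 1"] \<open>a 1 < k\<close> by simp_all
  ultimately have span1: "f 0 + r \<le> f (a 1 - 1)" and span2: "f (a 1) + r \<le> f (k - 1)"
    by linarith+
  have "f (a 1 - 1) \<le> f (a 1)" using gap[of "a 1 - 1" "a 1"] \<open>a 1 < k\<close> by simp
  moreover have "f (k - 1) < 4 * r" using \<open>f (k - 1) < N\<close> assms(5) r_def by linarith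
  moreover have "even (f 0 div r) = even (f (a 1 - 1) div r)"
    "even (f (a 1) div r) = even (f (k - 1) div r)"
    using block_parity_copy_same_side[where f = f, OF assms(1,2) copy assms(3)]
      block_parity_copy_same_side[where f = f, OF assms(1,2) copy assms(4)] \<open>0 < a 1\<close> \<open>a 1 < k\<close>
    by simp_all
  ultimately show False by (rule no_two_spans_in_four_blocks[OF \<open>0 < r\<close> span1 _ span2])
qed

theorem theorem1:
  fixes k :: nat and E :: "nat \<Rightarrow> nat \<Rightarrow> bool" and a :: "nat \<Rightarrow> nat"
  assumes "ograph k E"
    and "interval_chromatic_number k E = 2"
    and "stitched k E"
    and "interval_coloring k E a 2"
  shows "ordered_ramsey 2 k E \<ge> 4 * (min (a 1 - a 0) (a 2 - a 1) - 1) + 1"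
proof -
  have "ramsey_arrows 2 k E (ordered_ramsey 2 k E)"
    unfolding ordered_ramsey_def using ramsey_arrows_exists[OF assms(1)] by (rule LeastI_ex)
  moreover have "\<not> ramsey_arrows 2 k E N" if "N \<le> 4 * (min (a 1 - a 0) (a 2 - a 1) - 1)" for N
    using not_ramsey_arrows_4r[OF assms(1,4) stitched_2_parts_connected[OF assms] that] .
  ultimately have "\<not> ordered_ramsey 2 k E \<le> 4 * (min (a 1 - a 0) (a 2 - a 1) - 1)"
    by blast
  then show ?thesis by linarith
qed

end
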